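(* Assume $V$ is positive definite with smallest eigenvalue $\lambda$, and that $i_n$, $n\ge0$, are i.i.d. uniformly distributed on $\{1,\dots,d\}$. Then for every $j\ge0$, $$E(\|M_j\|^2)\le d^2\,(1-\lambda d^{-1})^j.$$
   Context: Let $d\ge1$ and let $V$ be a real symmetric $d\times d$ matrix whose diagonal entries all equal $1$. Write $\sqrt V$ for its symmetric positive semi-definite square root and $I$ for the $d\times d$ identity. Let $e_i$ be the $i$-th standard basis column vector of $\mathbb R^d$. For $1\le i\le d$ let $f_i=\sqrt V e_i$ and $P_i=I-f_if_i^T$. For $j\ge0$ let $M_j=P_{i_{j-1}}P_{i_{j-2}}\cdots P_{i_0}$, with $M_0=I$. For a $d\times d$ matrix $A$, $\|A\|=\sqrt{\operatorname{tr}(A^TVA)}$. *)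

theory Defs
  imports "HOL-Analysis.Analysis" "HOL-Probability.Probability"
begin

text \<open>Symmetric positive semi-definite square root of a matrix (unique when V is symmetric PSD).\<close>
definition psd_sqrt :: "real^'n^'n \<Rightarrow> real^'n^'n" where
  "psd_sqrt V = (THE S. transpose S = S \<and> (\<forall>x. 0 \<le> x \<bullet> (S *v x)) \<and> S ** S = V)"

definition pos_def :: "real^'n^'n \<Rightarrow> bool" where
  "pos_def V \<longleftrightarrow> (\<forall>x. x \<noteq> 0 \<longrightarrow> 0 < x \<bullet> (V *v x))"

definition is_eigenvalue :: "real^'n^'n \<Rightarrow> real \<Rightarrow> bool" where
  "is_eigenvalue V l \<longleftrightarrow> (\<exists>v. v \<noteq> 0 \<and> V *v v = l *\<^sub>R v)"

definition fvec :: "real^'n^'n \<Rightarrow> 'n \<Rightarrow> real^'n" where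
  "fvec V i = psd_sqrt V *v axis i 1"

definition Pmat :: "real^'n^'n \<Rightarrow> 'n \<Rightarrow> real^'n^'n" where
  "Pmat V i = mat 1 - (\<chi> a b. fvec V i $ a * fvec V i $ b)"

fun Mmat :: "real^'n^'n \<Rightarrow> (nat \<Rightarrow> 'n) \<Rightarrow> nat \<Rightarrow> real^'n^'n" where
  "Mmat V idx 0 = mat 1"
| "Mmat V idx (Suc j) = Pmat V (idx j) ** Mmat V idx j"

definition Vnorm :: "real^'n^'n \<Rightarrow> real^'n^'n \<Rightarrow> real" where
  "Vnorm V A = sqrt (trace (transpose A ** V ** A))"

end

theory Submission
  imports Defs
begin

text \<open>Since \<open>V\<close> has unit diagonal, each \<open>f\<^sub>i\<close> is a unit vector and \<open>P\<^sub>i\<close> is the orthogonal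
  projection onto its complement, so \<open>|P\<^sub>i x|\<^sup>2 = |x|\<^sup>2 - (f\<^sub>i \<bullet> x)\<^sup>2\<close>. Moreover
  \<open>\<Sum>\<^sub>i (f\<^sub>i \<bullet> x)\<^sup>2 = |\<surd>V x|\<^sup>2 = x \<bullet> V x\<close>, which lies between \<open>\<lambda>|x|\<^sup>2\<close> and \<open>d|x|\<^sup>2\<close>.
  Averaging over a uniform index therefore contracts \<open>|x|\<^sup>2\<close> by the factor \<open>1 - \<lambda>/d\<close>, and by
  independence of the indices \<open>E |M\<^sub>j x|\<^sup>2 \<le> (1 - \<lambda>/d)\<^sup>j |x|\<^sup>2\<close>. Finally
  \<open>\<parallel>A\<parallel>\<^sup>2 = \<Sum>\<^sub>k A e\<^sub>k \<bullet> V A e\<^sub>k \<le> d \<Sum>\<^sub>k |A e\<^sub>k|\<^sup>2\<close>; applied to \<open>A = M\<^sub>j\<close>, the sum over the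
  \<open>d\<close> columns gives the second factor \<open>d\<close>. The spectral theorem, needed both for the Rayleigh
  bound \<open>\<lambda>|x|\<^sup>2 \<le> x \<bullet> V x\<close> and for the existence and uniqueness of \<open>\<surd>V\<close>, is proved by
  maximising the quadratic form on the unit sphere.\<close>

section \<open>Spectral theorem for self-adjoint maps\<close>

lemma linear_coeff_zero_if_quadratic_nonpos:
  fixes a c :: real
  assumes nonpos: "\<And>t. 2 * t * a + t\<^sup>2 * c \<le> 0"
  shows "a = 0"
proof -
  define D where "D = \<bar>c\<bar> + 1"
  have "D > 0" "2 * D + c > 0" by (auto simp: D_def abs_if)
  have "(2 * (a / D) * a + (a / D)\<^sup>2 * c) * D\<^sup>2 = a\<^sup>2 * (2 * D + c)"
    using \<open>D > 0\<close> by (simp add: field_simps power2_eq_square)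
  moreover have "(2 * (a / D) * a + (a / D)\<^sup>2 * c) * D\<^sup>2 \<le> 0"
    using nonpos[of "a / D"] by (rule mult_nonpos_nonneg) simp
  ultimately have "a\<^sup>2 \<le> 0"
    using \<open>2 * D + c > 0\<close> by (simp add: mult_le_0_iff)
  then show ?thesis by simp
qed

lemma quadratic_form_attains_max_on_unit_sphere:
  fixes f :: "'a::euclidean_space \<Rightarrow> 'a"
  assumes "linear f" "subspace W" "W \<noteq> {0}"
  obtains u where "u \<in> W" "norm u = 1" "\<And>y. y \<in> W \<Longrightarrow> y \<bullet> f y \<le> (u \<bullet> f u) * (y \<bullet> y)"
proof -
  define K where "K = sphere 0 1 \<inter> W"
  have "compact K"
    unfolding K_def by (intro compact_Int_closed compact_sphere closed_subspace assms)
  obtain x where "x \<in> W" "x \<noteq> 0"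
    using assms(2,3) subspace_0 by blast
  then have "x /\<^sub>R norm x \<in> K"
    by (simp add: K_def subspace_scale assms(2))
  moreover have "continuous_on K (\<lambda>y. y \<bullet> f y)"
    using assms(1) by (intro continuous_intros linear_continuous_on)
      (simp add: linear_conv_bounded_linear)
  ultimately obtain u where u: "u \<in> K" and max: "\<And>y. y \<in> K \<Longrightarrow> y \<bullet> f y \<le> u \<bullet> f u"
    using continuous_attains_sup[OF \<open>compact K\<close>] by blast
  have "y \<bullet> f y \<le> (u \<bullet> f u) * (y \<bullet> y)" if "y \<in> W" for y
  proof (cases "y = 0")
    case False
    then have "y /\<^sub>R norm y \<in> K"
      using that by (simp add: K_def subspace_scale assms(2))
    moreover have "(y /\<^sub>R norm y) \<bullet> f (y /\<^sub>R norm y) = (y \<bullet> f y) / (norm y)\<^sup>2"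
      using linear_scale[OF assms(1)] by (simp add: power2_eq_square field_simps)
    ultimately have "(y \<bullet> f y) / (norm y)\<^sup>2 \<le> u \<bullet> f u"
      using max by fastforce
    then show ?thesis
      using False by (simp add: divide_le_eq power2_norm_eq_inner mult.commute)
  qed (simp add: linear_0 assms(1))
  moreover have "u \<in> W" "norm u = 1"
    using u by (auto simp: K_def)
  ultimately show thesis
    using that by blast
qed

lemma self_adjoint_maximizer_is_eigenvector:
  fixes f :: "'a::real_inner \<Rightarrow> 'a"
  assumes "linear f" and adj: "\<And>x y. f x \<bullet> y = x \<bullet> f y"
    and "subspace W" "f ` W \<subseteq> W" "u \<in> W" "norm u = 1"
    and max: "\<And>y. y \<in> W \<Longrightarrow> y \<bullet> f y \<le> (u \<bullet> f u) * (y \<bullet> y)"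
  shows "f u = (u \<bullet> f u) *\<^sub>R u"
proof -
  define m where "m = u \<bullet> f u"
  define w where "w = f u - m *\<^sub>R u"
  have uu: "u \<bullet> u = 1"
    using \<open>norm u = 1\<close> by (simp add: norm_eq_1)
  have "w \<in> W"
    using assms(3-5) by (auto simp: w_def subspace_diff subspace_scale)
  have wu: "w \<bullet> u = 0"
    by (simp add: w_def m_def uu inner_diff_left inner_diff_right inner_commute)
  have wfu: "w \<bullet> f u = w \<bullet> w" and ufw: "u \<bullet> f w = w \<bullet> w"
    using wu adj[of u w] by (simp_all add: w_def inner_diff_left inner_diff_right inner_commute)
  have "2 * t * (w \<bullet> w) + t\<^sup>2 * (w \<bullet> f w - m * (w \<bullet> w)) \<le> 0" for t
  proof -
    have "u + t *\<^sub>R w \<in> W"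
      using \<open>w \<in> W\<close> assms(3,5) by (simp add: subspace_add subspace_scale)
    from max[OF this] show ?thesis
      using assms(1) wu wfu ufw uu
      by (simp add: linear_add linear_scale inner_commute
          m_def[symmetric] algebra_simps power2_eq_square)
  qed
  then have "w \<bullet> w = 0"
    by (rule linear_coeff_zero_if_quadratic_nonpos)
  then show ?thesis
    by (simp add: w_def m_def)
qed

lemma self_adjoint_eigenbasis_of_invariant_subspace:
  fixes f :: "'a::euclidean_space \<Rightarrow> 'a"
  assumes "linear f" and adj: "\<And>x y. f x \<bullet> y = x \<bullet> f y"
  shows "subspace W \<Longrightarrow> f ` W \<subseteq> W \<Longrightarrow> \<exists>B. finite B \<and> B \<subseteq> W \<and> span B = W \<and>
    pairwise orthogonal B \<and> (\<forall>b\<in>B. norm b = 1 \<and> f b = (b \<bullet> f b) *\<^sub>R b)"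
proof (induction "dim W" arbitrary: W rule: less_induct)
  case less
  show ?case
  proof (cases "W = {0}")
    case True
    then show ?thesis
      by (intro exI[of _ "{}"]) auto
  next
    case False
    then obtain u where u: "u \<in> W" "norm u = 1"
      and max: "\<And>y. y \<in> W \<Longrightarrow> y \<bullet> f y \<le> (u \<bullet> f u) * (y \<bullet> y)"
      using quadratic_form_attains_max_on_unit_sphere[OF \<open>linear f\<close> less.prems(1)] by blast
    have eig: "f u = (u \<bullet> f u) *\<^sub>R u"
      using self_adjoint_maximizer_is_eigenvector[OF \<open>linear f\<close> adj less.prems u max] .
    define W' where "W' = {y \<in> W. orthogonal u y}"
    have W'_subspace: "subspace W'"
      using less.prems(1) by (auto simp: W'_def subspace_def orthogonal_def inner_add_right)
    have W'_invariant: "f ` W' \<subseteq> W'"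
    proof
      fix z assume "z \<in> f ` W'"
      then obtain y where "y \<in> W'" "z = f y" by blast
      moreover have "u \<bullet> f y = (u \<bullet> f u) * (u \<bullet> y)"
        by (subst adj[symmetric], subst eig) simp
      ultimately show "z \<in> W'"
        using less.prems(2) by (auto simp: W'_def orthogonal_def)
    qed
    have "dim W' < dim W"
    proof (rule dim_psubset)
      have "u \<notin> W'"
        using u by (auto simp: W'_def orthogonal_def norm_eq_1)
      then have "W' \<subset> W"
        using u by (auto simp: W'_def)
      moreover have "span W' = W'" "span W = W"
        using W'_subspace less.prems(1) by (simp_all only: span_eq_iff)
      ultimately show "span W' \<subset> span W"
        by (simp only:)
    qed
    then obtain B where B: "finite B" "B \<subseteq> W'" "span B = W'" "pairwise orthogonal B"
      "\<forall>b\<in>B. norm b = 1 \<and> f b = (b \<bullet> f b) *\<^sub>R b"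
      using less.hyps[OF _ W'_subspace W'_invariant] by blast
    have "span (insert u B) = W"
    proof
      show "span (insert u B) \<subseteq> W"
        using u B(2) less.prems(1) by (intro span_minimal) (auto simp: W'_def)
      show "W \<subseteq> span (insert u B)"
      proof
        fix y assume "y \<in> W"
        then have "y - (u \<bullet> y) *\<^sub>R u \<in> span B"
          using u less.prems(1) by (simp add: B(3) W'_def orthogonal_def subspace_diff
              subspace_scale inner_diff_right norm_eq_1)
        then have "y - (u \<bullet> y) *\<^sub>R u \<in> span (insert u B)"
          using span_mono[OF subset_insertI] by blast
        moreover have "(u \<bullet> y) *\<^sub>R u \<in> span (insert u B)"
          by (simp add: span_base span_scale)
        ultimately have "y - (u \<bullet> y) *\<^sub>R u + (u \<bullet> y) *\<^sub>R u \<in> span (insert u B)"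
          by (rule span_add)
        then show "y \<in> span (insert u B)" by simp
      qed
    qed
    moreover have "pairwise orthogonal (insert u B)"
      using B(2,4) by (intro pairwise_orthogonal_insert) (auto simp: W'_def)
    ultimately show ?thesis
      using u eig B by (intro exI[of _ "insert u B"]) (auto simp: W'_def)
  qed
qed

lemma self_adjoint_orthonormal_eigenbasis:
  fixes f :: "'a::euclidean_space \<Rightarrow> 'a"
  assumes "linear f" "\<And>x y. f x \<bullet> y = x \<bullet> f y"
  obtains B where "finite B" "span B = UNIV" "pairwise orthogonal B"
    "\<And>b. b \<in> B \<Longrightarrow> norm b = 1" "\<And>b. b \<in> B \<Longrightarrow> f b = (b \<bullet> f b) *\<^sub>R b"
  using self_adjoint_eigenbasis_of_invariant_subspace[OF assms subspace_UNIV] by auto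

lemma sum_orthonormal_inner_scaleR:
  fixes B :: "'a::real_inner set" and g :: "'a \<Rightarrow> 'b::real_vector"
  assumes "finite B" "pairwise orthogonal B" "\<And>b. b \<in> B \<Longrightarrow> norm b = 1" "c \<in> B"
  shows "(\<Sum>b\<in>B. (c \<bullet> b) *\<^sub>R g b) = g c"
proof -
  have "c \<bullet> b = 0" if "b \<in> B - {c}" for b
    using assms(2,4) that by (auto simp: pairwise_def orthogonal_def)
  then have "(\<Sum>b\<in>B - {c}. (c \<bullet> b) *\<^sub>R g b) = 0"
    by simp
  moreover have "c \<bullet> c = 1"
    using assms(3,4) by (simp add: norm_eq_1)
  ultimately show ?thesis
    using sum.remove[OF assms(1,4), of "\<lambda>b. (c \<bullet> b) *\<^sub>R g b"] by simp
qed

lemma quadratic_form_in_eigenbasis: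
  fixes f :: "'a::euclidean_space \<Rightarrow> 'a"
  assumes "linear f" "finite B" "span B = UNIV" "pairwise orthogonal B"
    "\<And>b. b \<in> B \<Longrightarrow> norm b = 1" "\<And>b. b \<in> B \<Longrightarrow> f b = \<mu> b *\<^sub>R b"
  shows "x \<bullet> f x = (\<Sum>b\<in>B. \<mu> b * (x \<bullet> b)\<^sup>2)"
proof -
  have "x = (\<Sum>b\<in>B. (x \<bullet> b) *\<^sub>R b)"
    using orthonormal_basis_expand[OF assms(4,5)] assms(2,3) by simp
  then have "f x = f (\<Sum>b\<in>B. (x \<bullet> b) *\<^sub>R b)"
    by (rule arg_cong)
  also have "\<dots> = (\<Sum>b\<in>B. (\<mu> b * (x \<bullet> b)) *\<^sub>R b)"
    by (simp add: linear_sum[OF assms(1)] linear_scale[OF assms(1)] assms(6) mult.commute)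
  finally show ?thesis
    by (simp add: inner_sum_right power2_eq_square mult_ac)
qed

section \<open>Symmetric and positive semidefinite matrices\<close>

lemma symmetric_matrix_inner:
  fixes V :: "real^'n^'n"
  assumes "transpose V = V"
  shows "(V *v x) \<bullet> y = x \<bullet> (V *v y)"
  by (metis assms dot_lmul_matrix vector_transpose_matrix)

lemma symmetric_matrix_iff_self_adjoint:
  fixes V :: "real^'n^'n"
  shows "transpose V = V \<longleftrightarrow> (\<forall>x y. (V *v x) \<bullet> y = x \<bullet> (V *v y))"
proof
  assume "\<forall>x y. (V *v x) \<bullet> y = x \<bullet> (V *v y)"
  then have "(V *v axis j 1) \<bullet> axis i 1 = axis j 1 \<bullet> (V *v axis i 1)" for i j
    by blast
  then have "V $ i $ j = V $ j $ i" for i j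
    by (simp add: matrix_vector_mult_basis column_def inner_axis inner_axis')
  then show "transpose V = V"
    by (simp add: vec_eq_iff transpose_def)
qed (simp add: symmetric_matrix_inner)

lemma symmetric_matrix_orthonormal_eigenbasis:
  fixes V :: "real^'n^'n"
  assumes "transpose V = V"
  obtains B where "finite B" "span B = UNIV" "pairwise orthogonal B"
    "\<And>b. b \<in> B \<Longrightarrow> norm b = 1" "\<And>b. b \<in> B \<Longrightarrow> V *v b = (b \<bullet> (V *v b)) *\<^sub>R b"
  using self_adjoint_orthonormal_eigenbasis[OF matrix_vector_mul_linear symmetric_matrix_inner[OF assms]]
  by blast

lemma eigenvalue_lower_bound_quadratic_form:
  fixes V :: "real^'n^'n"
  assumes "transpose V = V" and lower: "\<And>\<mu>. is_eigenvalue V \<mu> \<Longrightarrow> lam \<le> \<mu>"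
  shows "lam * (x \<bullet> x) \<le> x \<bullet> (V *v x)"
proof -
  obtain B where B: "finite B" "span B = UNIV" "pairwise orthogonal B" "\<And>b. b \<in> B \<Longrightarrow> norm b = 1"
    and eig: "\<And>b. b \<in> B \<Longrightarrow> V *v b = (b \<bullet> (V *v b)) *\<^sub>R b"
    using symmetric_matrix_orthonormal_eigenbasis[OF assms(1)] by blast
  have "lam \<le> b \<bullet> (V *v b)" if "b \<in> B" for b
    using lower B(4) eig that unfolding is_eigenvalue_def by (metis norm_zero zero_neq_one)
  then have "(\<Sum>b\<in>B. lam * (x \<bullet> b)\<^sup>2) \<le> (\<Sum>b\<in>B. (b \<bullet> (V *v b)) * (x \<bullet> b)\<^sup>2)"
    by (intro sum_mono mult_right_mono) auto
  moreover have "x \<bullet> x = (\<Sum>b\<in>B. 1 * (x \<bullet> b)\<^sup>2)"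
    using quadratic_form_in_eigenbasis[OF linear_id B, of "\<lambda>_. 1"] by simp
  moreover have "x \<bullet> (V *v x) = (\<Sum>b\<in>B. (b \<bullet> (V *v b)) * (x \<bullet> b)\<^sup>2)"
    using quadratic_form_in_eigenbasis[OF matrix_vector_mul_linear B eig] .
  ultimately show ?thesis
    by (simp add: sum_distrib_left)
qed

lemma eigenvalue_lower_bound_le_one:
  fixes V :: "real^'n^'n"
  assumes "transpose V = V" "\<And>i. V $ i $ i = 1" "\<And>\<mu>. is_eigenvalue V \<mu> \<Longrightarrow> lam \<le> \<mu>"
  shows "lam \<le> 1"
  using eigenvalue_lower_bound_quadratic_form[OF assms(1,3), of "axis undefined 1"] assms(2)
  by (simp add: matrix_vector_mult_basis column_def inner_axis')

lemma matrix_eq_on_spanning_set: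
  fixes A C :: "real^'n^'m"
  assumes "span B = UNIV" "\<And>b. b \<in> B \<Longrightarrow> A *v b = C *v b"
  shows "A = C"
  using linear_eq_on_span[OF matrix_vector_mul_linear matrix_vector_mul_linear, of B A C] assms
  by (simp add: matrix_eq)

lemma psd_square_root_on_eigenvector:
  fixes S V :: "real^'n^'n"
  assumes "transpose S = S" "\<And>x. 0 \<le> x \<bullet> (S *v x)" "S ** S = V"
    and "V *v b = \<mu> *\<^sub>R b" "0 \<le> \<mu>"
  shows "S *v b = sqrt \<mu> *\<^sub>R b"
proof (cases "\<mu> = 0")
  case True
  then have "S *v (S *v b) = 0"
    using assms(3,4) by (simp add: matrix_vector_mul_assoc)
  then have "(S *v b) \<bullet> (S *v b) = 0"
    using symmetric_matrix_inner[OF assms(1), of b "S *v b"] by simp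
  with True show ?thesis
    by simp
next
  case False
  define s where "s = sqrt \<mu>"
  have "s > 0" "s * s = \<mu>"
    using False assms(5) by (auto simp: s_def)
  define u where "u = S *v b - s *\<^sub>R b"
  \<comment> \<open>u is an eigenvector of S for the negative eigenvalue -s, so positivity of S forces u = 0\<close>
  have "S *v u = - s *\<^sub>R u"
    using assms(3,4) \<open>s * s = \<mu>\<close>
    by (simp add: u_def matrix_vector_mult_diff_distrib matrix_vector_mul_assoc
        matrix_vector_mult_scaleR algebra_simps)
  then have "0 \<le> - s * (u \<bullet> u)"
    using assms(2)[of u] by simp
  then have "u \<bullet> u \<le> 0"
    using \<open>s > 0\<close> by (simp add: mult_le_0_iff)
  then have "u = 0"
    by (metis inner_eq_zero_iff inner_ge_zero order_antisym)
  then show ?thesis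
    by (simp add: u_def s_def)
qed

lemma psd_square_root_unique:
  fixes S T :: "real^'n^'n"
  assumes "transpose S = S" "\<And>x. 0 \<le> x \<bullet> (S *v x)"
    and "transpose T = T" "\<And>x. 0 \<le> x \<bullet> (T *v x)"
    and "S ** S = T ** T"
  shows "S = T"
proof -
  define V where "V = S ** S"
  have "transpose V = V"
    using assms(1) by (simp add: V_def matrix_transpose_mul)
  then obtain B where B: "span B = UNIV"
    and eig: "\<And>b. b \<in> B \<Longrightarrow> V *v b = (b \<bullet> (V *v b)) *\<^sub>R b"
    using symmetric_matrix_orthonormal_eigenbasis by metis
  have "0 \<le> x \<bullet> (V *v x)" for x
    using symmetric_matrix_inner[OF assms(1), of x "S *v x"] inner_ge_zero[of "S *v x"]
    by (simp add: V_def matrix_vector_mul_assoc[symmetric])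
  then show ?thesis
    using B psd_square_root_on_eigenvector[OF assms(1,2) V_def[symmetric] eig]
      psd_square_root_on_eigenvector[OF assms(3,4) _ eig] assms(5)
    by (intro matrix_eq_on_spanning_set[of B]) (simp_all add: V_def)
qed

lemma psd_square_root_exists:
  fixes V :: "real^'n^'n"
  assumes "transpose V = V" "\<And>x. 0 \<le> x \<bullet> (V *v x)"
  obtains S where "transpose S = S" "\<And>x. 0 \<le> x \<bullet> (S *v x)" "S ** S = V"
proof -
  obtain B where B: "finite B" "span B = UNIV" "pairwise orthogonal B" "\<And>b. b \<in> B \<Longrightarrow> norm b = 1"
    and eig: "\<And>b. b \<in> B \<Longrightarrow> V *v b = (b \<bullet> (V *v b)) *\<^sub>R b"
    using symmetric_matrix_orthonormal_eigenbasis[OF assms(1)] by blast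
  define r where "r b = sqrt (b \<bullet> (V *v b))" for b
  define S where "S = matrix (\<lambda>x. \<Sum>b\<in>B. (r b * (x \<bullet> b)) *\<^sub>R b)"
  have "linear (\<lambda>x. \<Sum>b\<in>B. (r b * (x \<bullet> b)) *\<^sub>R b)"
    by (rule linearI) (simp_all add: inner_add_left algebra_simps sum.distrib scaleR_sum_right)
  then have S: "S *v x = (\<Sum>b\<in>B. (r b * (x \<bullet> b)) *\<^sub>R b)" for x
    unfolding S_def by simp
  have S_eig: "S *v c = r c *\<^sub>R c" if "c \<in> B" for c
    using sum_orthonormal_inner_scaleR[OF B(1,3,4) that, of "\<lambda>b. r b *\<^sub>R b"]
    by (simp add: S inner_commute mult.commute)
  have "transpose S = S"
    unfolding symmetric_matrix_iff_self_adjoint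
    by (simp add: S inner_sum_left inner_sum_right inner_commute mult_ac)
  moreover have "0 \<le> x \<bullet> (S *v x)" for x
    using quadratic_form_in_eigenbasis[OF matrix_vector_mul_linear B S_eig]
    by (simp add: r_def sum_nonneg assms(2))
  moreover have "S ** S = V"
  proof (rule matrix_eq_on_spanning_set[OF B(2)])
    fix b assume "b \<in> B"
    then show "(S ** S) *v b = V *v b"
      using assms(2)[of b] eig
      by (simp add: matrix_vector_mul_assoc[symmetric] S_eig matrix_vector_mult_scaleR r_def)
  qed
  ultimately show thesis
    using that by blast
qed

lemma psd_sqrt:
  fixes V :: "real^'n^'n"
  assumes "transpose V = V" "\<And>x. 0 \<le> x \<bullet> (V *v x)"
  shows "transpose (psd_sqrt V) = psd_sqrt V" "psd_sqrt V ** psd_sqrt V = V"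
proof -
  obtain S where S: "transpose S = S" "\<And>x. 0 \<le> x \<bullet> (S *v x)" "S ** S = V"
    using psd_square_root_exists[OF assms] by blast
  have "psd_sqrt V = S"
    unfolding psd_sqrt_def
    by (rule the_equality) (use S psd_square_root_unique in auto)
  with S show "transpose (psd_sqrt V) = psd_sqrt V" "psd_sqrt V ** psd_sqrt V = V"
    by simp_all
qed

section \<open>Random products of the projections\<close>

lemma trace_transpose_mult_mult:
  fixes A V :: "real^'n^'n"
  shows "trace (transpose A ** V ** A) = (\<Sum>k\<in>UNIV. (A *v axis k 1) \<bullet> (V *v (A *v axis k 1)))"
proof -
  have "A *v axis k 1 = (\<chi> a. A $ a $ k)" for k
    by (simp add: matrix_vector_mult_basis column_def)
  then show ?thesis
    unfolding matrix_mul_assoc[symmetric]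
    by (simp add: trace_def matrix_matrix_mult_def transpose_def inner_vec_def
        matrix_vector_mult_def)
qed

lemma Pmat_mult_vector: "Pmat V i *v x = x - (fvec V i \<bullet> x) *\<^sub>R fvec V i"
proof -
  have "(\<chi> a b. fvec V i $ a * fvec V i $ b) *v x = (fvec V i \<bullet> x) *\<^sub>R fvec V i"
    by (simp add: vec_eq_iff matrix_vector_mult_def inner_vec_def sum_distrib_left mult_ac)
  then show ?thesis
    by (simp add: Pmat_def matrix_vector_mult_diff_rdistrib)
qed

lemma Mmat_cong: "(\<And>i. i < j \<Longrightarrow> idx i = idx' i) \<Longrightarrow> Mmat V idx j = Mmat V idx' j"
  by (induction j) auto

lemma expectation_Pi_pmf_insert_uniform:
  fixes g :: "('a \<Rightarrow> 'b) \<Rightarrow> real"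
  assumes "finite A" "x \<notin> A" "finite S" "S \<noteq> {}"
  shows "measure_pmf.expectation (Pi_pmf (insert x A) dflt (\<lambda>_. pmf_of_set S)) g =
    (\<Sum>y\<in>S. measure_pmf.expectation (Pi_pmf A dflt (\<lambda>_. pmf_of_set S)) (\<lambda>f. g (f(x := y)))) / card S"
proof -
  have "Pi_pmf (insert x A) dflt (\<lambda>_. pmf_of_set S) =
      pmf_of_set S \<bind> (\<lambda>y. map_pmf (\<lambda>f. f(x := y)) (Pi_pmf A dflt (\<lambda>_. pmf_of_set S)))"
    using assms(1,2) by (simp add: Pi_pmf_insert' map_pmf_def)
  moreover have "finite (set_pmf (Pi_pmf A dflt (\<lambda>_. pmf_of_set S)))"
    using assms by (simp add: set_Pi_pmf finite_PiE_dflt)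
  ultimately show ?thesis
    using assms(3,4)
    by (simp add: pmf_expectation_bind_pmf_of_set sum_divide_distrib divide_inverse_commute
        sum_distrib_left)
qed

abbreviation random_indices :: "nat \<Rightarrow> (nat \<Rightarrow> 'n::finite) pmf" where
  "random_indices j \<equiv> Pi_pmf {..<j} undefined (\<lambda>_. pmf_of_set UNIV)"

lemma integrable_random_indices:
  fixes h :: "(nat \<Rightarrow> 'n::finite) \<Rightarrow> real"
  shows "integrable (random_indices j) h"
  by (simp add: integrable_measure_pmf_finite set_Pi_pmf finite_PiE_dflt)

context
  fixes V :: "real^'n^'n"
  assumes sym: "transpose V = V" and psd: "\<And>x. 0 \<le> x \<bullet> (V *v x)"
    and unit_diag: "\<And>i. V $ i $ i = 1"
begin

lemma inner_fvec: "fvec V i \<bullet> x = (psd_sqrt V *v x) $ i"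
  using symmetric_matrix_inner[OF psd_sqrt(1)[OF sym psd], of "axis i 1" x]
  by (simp add: fvec_def inner_axis')

lemma inner_fvec_self: "fvec V i \<bullet> fvec V i = 1"
proof -
  have "fvec V i \<bullet> fvec V i = (psd_sqrt V *v (psd_sqrt V *v axis i 1)) $ i"
    by (subst inner_fvec) (simp add: fvec_def)
  also have "\<dots> = V $ i $ i"
    by (simp only: matrix_vector_mul_assoc psd_sqrt(2)[OF sym psd])
      (simp add: matrix_vector_mult_basis column_def)
  finally show ?thesis
    using unit_diag by simp
qed

lemma sum_inner_fvec_squared: "(\<Sum>i\<in>UNIV. (fvec V i \<bullet> x)\<^sup>2) = x \<bullet> (V *v x)"
proof -
  have "(\<Sum>i\<in>UNIV. (fvec V i \<bullet> x)\<^sup>2) = (psd_sqrt V *v x) \<bullet> (psd_sqrt V *v x)"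
    by (simp only: inner_fvec) (simp add: inner_vec_def power2_eq_square)
  also have "\<dots> = x \<bullet> (V *v x)"
    by (simp add: symmetric_matrix_inner[OF psd_sqrt(1)[OF sym psd]] matrix_vector_mul_assoc
        psd_sqrt(2)[OF sym psd])
  finally show ?thesis .
qed

lemma quadratic_form_le_card: "x \<bullet> (V *v x) \<le> real CARD('n) * (x \<bullet> x)"
proof -
  have "(fvec V i \<bullet> x)\<^sup>2 \<le> x \<bullet> x" for i
    using Cauchy_Schwarz_ineq[of "fvec V i" x] by (simp add: inner_fvec_self)
  then have "(\<Sum>i\<in>UNIV. (fvec V i \<bullet> x)\<^sup>2) \<le> (\<Sum>i\<in>(UNIV :: 'n set). x \<bullet> x)"
    by (intro sum_mono)
  then show ?thesis
    by (simp add: sum_inner_fvec_squared)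
qed

lemma inner_Pmat_mult_self: "(Pmat V i *v x) \<bullet> (Pmat V i *v x) = x \<bullet> x - (fvec V i \<bullet> x)\<^sup>2"
  by (simp add: Pmat_mult_vector inner_diff_left inner_diff_right inner_fvec_self inner_commute
      power2_eq_square)

lemma average_Pmat_contraction:
  assumes "\<And>\<mu>. is_eigenvalue V \<mu> \<Longrightarrow> lam \<le> \<mu>"
  shows "(\<Sum>i\<in>UNIV. (Pmat V i *v x) \<bullet> (Pmat V i *v x)) / real CARD('n)
    \<le> (1 - lam / real CARD('n)) * (x \<bullet> x)"
proof -
  have "(\<Sum>i\<in>UNIV. (Pmat V i *v x) \<bullet> (Pmat V i *v x)) = real CARD('n) * (x \<bullet> x) - x \<bullet> (V *v x)"
    by (simp add: inner_Pmat_mult_self sum_subtractf sum_inner_fvec_squared)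
  also have "\<dots> \<le> real CARD('n) * (x \<bullet> x) - lam * (x \<bullet> x)"
    using eigenvalue_lower_bound_quadratic_form[OF sym assms] by simp
  also have "\<dots> = (1 - lam / real CARD('n)) * (x \<bullet> x) * real CARD('n)"
    by (simp add: field_simps)
  finally show ?thesis
    by (simp add: pos_divide_le_eq)
qed

lemma Vnorm_squared_le: "(Vnorm V A)\<^sup>2 \<le> real CARD('n) * (\<Sum>k\<in>UNIV. (A *v axis k 1) \<bullet> (A *v axis k 1))"
proof -
  have "0 \<le> trace (transpose A ** V ** A)"
    by (simp add: trace_transpose_mult_mult sum_nonneg psd)
  then have "(Vnorm V A)\<^sup>2 = (\<Sum>k\<in>UNIV. (A *v axis k 1) \<bullet> (V *v (A *v axis k 1)))"
    by (simp add: Vnorm_def trace_transpose_mult_mult)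
  also have "\<dots> \<le> (\<Sum>k\<in>UNIV. real CARD('n) * ((A *v axis k 1) \<bullet> (A *v axis k 1)))"
    by (intro sum_mono quadratic_form_le_card)
  finally show ?thesis
    by (simp add: sum_distrib_left)
qed

lemma expectation_Mmat_mult_vector:
  assumes lower: "\<And>\<mu>. is_eigenvalue V \<mu> \<Longrightarrow> lam \<le> \<mu>"
  shows "measure_pmf.expectation (random_indices j) (\<lambda>idx. (Mmat V idx j *v x) \<bullet> (Mmat V idx j *v x))
    \<le> (1 - lam / real CARD('n)) ^ j * (x \<bullet> x)"
proof (induction j)
  case (Suc j)
  define c where "c = 1 - lam / real CARD('n)"
  have "lam \<le> real CARD('n)"
    using eigenvalue_lower_bound_le_one[OF sym unit_diag lower] by (simp add: order_trans)
  then have "0 \<le> c"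
    by (simp add: c_def)
  define z where "z idx = Mmat V idx j *v x" for idx
  have upd: "Mmat V (idx(j := y)) j = Mmat V idx j" for idx y
    by (rule Mmat_cong) simp
  have "measure_pmf.expectation (random_indices (Suc j))
      (\<lambda>idx. (Mmat V idx (Suc j) *v x) \<bullet> (Mmat V idx (Suc j) *v x))
    = measure_pmf.expectation (random_indices j)
      (\<lambda>idx. (\<Sum>y\<in>UNIV. (Pmat V y *v z idx) \<bullet> (Pmat V y *v z idx)) / real CARD('n))"
    by (simp add: lessThan_Suc expectation_Pi_pmf_insert_uniform upd z_def
        matrix_vector_mul_assoc[symmetric] integrable_random_indices integral_sum)
  also have "\<dots> \<le> measure_pmf.expectation (random_indices j) (\<lambda>idx. c * (z idx \<bullet> z idx))"
    by (intro integral_mono integrable_random_indices average_Pmat_contraction[OF lower, folded c_def])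
  also have "\<dots> \<le> c * (c ^ j * (x \<bullet> x))"
    using Suc.IH \<open>0 \<le> c\<close> by (simp add: z_def c_def mult_left_mono)
  finally show ?case
    by (simp add: c_def)
qed simp

end

theorem lemma5p1:
  fixes V :: "real^'n^'n" and lam :: real and j :: nat
  assumes "transpose V = V"
    and "\<forall>i. V $ i $ i = 1"
    and "pos_def V"
    and "is_eigenvalue V lam"
    and "\<forall>mu. is_eigenvalue V mu \<longrightarrow> lam \<le> mu"
  shows "measure_pmf.expectation (Pi_pmf {..<j} undefined (\<lambda>_. pmf_of_set (UNIV :: 'n set)))
           (\<lambda>idx. (Vnorm V (Mmat V idx j))\<^sup>2)
         \<le> (real CARD('n))\<^sup>2 * (1 - lam / real CARD('n)) ^ j"
proof -
  have psd: "0 \<le> x \<bullet> (V *v x)" for x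
    using assms(3) by (cases "x = 0") (auto simp: pos_def_def less_imp_le)
  note Vnorm_le = Vnorm_squared_le[OF assms(1) psd assms(2)[rule_format]]
  note decay = expectation_Mmat_mult_vector[OF assms(1) psd assms(2)[rule_format] assms(5)[rule_format]]
  define d where "d = real CARD('n)"
  have "measure_pmf.expectation (random_indices j) (\<lambda>idx. (Vnorm V (Mmat V idx j))\<^sup>2)
    \<le> measure_pmf.expectation (random_indices j)
      (\<lambda>idx. d * (\<Sum>k\<in>UNIV. (Mmat V idx j *v axis k 1) \<bullet> (Mmat V idx j *v axis k 1)))"
    by (intro integral_mono integrable_random_indices) (simp add: d_def Vnorm_le)
  also have "\<dots> = d * (\<Sum>k\<in>UNIV. measure_pmf.expectation (random_indices j)
      (\<lambda>idx. (Mmat V idx j *v axis k 1) \<bullet> (Mmat V idx j *v axis k 1)))"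
    by (simp add: integral_sum integrable_random_indices)
  also have "\<dots> \<le> d * (\<Sum>k\<in>(UNIV :: 'n set). (1 - lam / d) ^ j)"
    using decay[of j "axis k 1" for k] by (intro mult_left_mono sum_mono) (simp_all add: d_def)
  finally show ?thesis
    by (simp add: d_def power2_eq_square)
qed

end
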